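(* Use of the Euler-Poincar\'e (EP) theorem yields the following Kelvin circulation theorem \begin{align} \frac{d}{dt}\oint_{c(\mathbf{\widehat v})} \big( \mathbf{\widehat{v}}\cdot d\mathbf{r} + \sigma^2\widehat{w}\,d\zeta\big) = - \oint_{c(\mathbf{\widehat v})} \frac{1}{\rho}d{\widetilde p}\,. \end{align}
   Context: Setting: a 2D free surface model (composition of maps) in which the horizontal current is a flow map $\phi_t:\mathbb{R}^2\to\mathbb{R}^2$ with velocity $\mathbf{\widehat v}(\mathbf{r},t)$, and the wave is a vertical elevation $\zeta(\mathbf{r},t)$ carried by the current, with vertical velocity $\widehat{w} = \partial_t\zeta + \mathbf{\widehat{v}}\cdot\nabla_{\mathbf{r}}\zeta$. The dynamics follow from Hamilton's principle $0=\delta\int_a^b \ell\,dt$ with $\ell(\mathbf{\widehat{v}},\zeta,D,\rho)=\int_{\cal D}\Big( \tfrac{1}{2}\big( |\mathbf{\widehat{v}}|^2 + \sigma^2\widehat w^2 \big) - \tfrac{\rho_{ref}}{\rho} \tfrac{\zeta^2}{2Fr^2} \Big) D\rho - p(D-1)\,d^2r$, where $\sigma^2$ (squared aspect ratio) and $Fr^2$ (squared Froude number) are dimensionless constants, $\rho_{ref}$ is a constant reference density, the areal density $D\,d^2r$ and buoyancy $\rho$ are advected by $\mathbf{\widehat v}$ ($\partial_t D + \mathrm{div}(D\mathbf{\widehat v})=0$, $\partial_t\rho+\mathbf{\widehat v}\cdot\nabla\rho=0$), and the pressure $p$ is a Lagrange multiplier enforcing $D=1$, i.e. $\mathrm{div}\,\mathbf{\widehat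 v}=0$. Here $\widetilde p := p + \rho_{ref}\zeta^2/(2Fr^2)$, and $c(\mathbf{\widehat v})$ is a closed loop moving with the horizontal flow velocity $\mathbf{\widehat v}$. *)

theory Defs
  imports "HOL-Analysis.Analysis"
begin

definition C1_on :: "'a set \<Rightarrow> ('a::real_normed_vector \<Rightarrow> 'b::real_normed_vector) \<Rightarrow> bool" where
  "C1_on S f \<longleftrightarrow> (\<forall>z\<in>S. f differentiable (at z)) \<and>
      (\<forall>u. continuous_on S (\<lambda>z. frechet_derivative f (at z) u))"

definition pt :: "(real \<Rightarrow> 'x \<Rightarrow> 'b::real_normed_vector) \<Rightarrow> real \<Rightarrow> 'x \<Rightarrow> 'b" where
  "pt f t x = vector_derivative (\<lambda>s. f s x) (at t)"

definition dirD :: "(real^2 \<Rightarrow> 'b::real_normed_vector) \<Rightarrow> real^2 \<Rightarrow> real^2 \<Rightarrow> 'b" where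
  "dirD F x u = vector_derivative (\<lambda>h. F (x + h *\<^sub>R u)) (at 0)"

definition grad :: "(real^2 \<Rightarrow> real) \<Rightarrow> real^2 \<Rightarrow> real^2" where
  "grad f x = (\<chi> i. dirD f x (axis i 1))"

definition div2 :: "(real^2 \<Rightarrow> real^2) \<Rightarrow> real^2 \<Rightarrow> real" where
  "div2 V x = (\<Sum>i\<in>UNIV. (dirD V x (axis i 1)) $ i)"

definition gradT :: "(real^2 \<Rightarrow> real^2) \<Rightarrow> real^2 \<Rightarrow> real^2 \<Rightarrow> real^2" where
  "gradT V x M = (\<chi> i. M \<bullet> dirD V x (axis i 1))"

text \<open>Lagrangian density of the model, as a function of the pointwise values
  v, zeta_t, grad zeta, zeta, D, rho, p (with w = zeta_t + v . grad zeta):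
  (1/2 (|v|^2 + sigma^2 w^2) - (rho_ref/rho) zeta^2/(2 Fr^2)) D rho - p (D - 1).\<close>
definition Lden :: "real \<Rightarrow> real \<Rightarrow> real \<Rightarrow> real^2 \<Rightarrow> real \<Rightarrow> real^2 \<Rightarrow> real \<Rightarrow> real \<Rightarrow> real \<Rightarrow> real \<Rightarrow> real" where
  "Lden \<sigma> Fr \<rho>ref vv zt gz z Dd r pp =
     (1/2 * (vv \<bullet> vv + \<sigma>^2 * (zt + vv \<bullet> gz)^2) - \<rho>ref / r * z^2 / (2 * Fr^2)) * Dd * r
     - pp * (Dd - 1)"

text \<open>Variational derivatives of ell (the integrand contains no spatial
  derivatives of v, D, rho, so these are pointwise partial derivatives).\<close>
definition dL_dv where
  "dL_dv \<sigma> Fr \<rho>ref vv zt gz z Dd r pp =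
     (\<chi> i. dirD (\<lambda>u. Lden \<sigma> Fr \<rho>ref u zt gz z Dd r pp) vv (axis i 1))"

definition dL_dD where
  "dL_dD \<sigma> Fr \<rho>ref vv zt gz z Dd r pp = deriv (\<lambda>d. Lden \<sigma> Fr \<rho>ref vv zt gz z d r pp) Dd"

definition dL_drho where
  "dL_drho \<sigma> Fr \<rho>ref vv zt gz z Dd r pp = deriv (\<lambda>s. Lden \<sigma> Fr \<rho>ref vv zt gz z Dd s pp) r"

end

theory Submission
  imports Defs
begin

text \<open>
  The circulation integrand v \<bullet> dr + \<sigma>^2 w d\<zeta> is m \<bullet> dr for m = v + \<sigma>^2 w grad \<zeta>, and
  m = (\<delta>l/\<delta>v)/\<rho> because D = 1. The tangent c_s of a loop carried by v obeys
  d/dt c_s = (grad v) c_s, so the circulation changes at the rate of the loop integral of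
  (D_t m + (grad v)^T m) \<bullet> dr, with D_t = d/dt + v \<bullet> grad the material derivative.
  Since D = 1 makes v divergence free and \<rho> is advected, the Euler-Poincare equation
  divided by \<rho> says D_t m + (grad v)^T m = grad K - (grad P)/\<rho>, with kinetic energy
  K = (|v|^2 + \<sigma>^2 w^2)/2 and modified pressure P = p + \<rho>_ref \<zeta>^2/(2 Fr^2).
  The exact differential dK integrates to zero around the closed loop.
\<close>

section \<open>Differential calculus on time and space\<close>

definition C1_deriv_on ::
    "'a::real_normed_vector set \<Rightarrow> ('a \<Rightarrow> 'b::real_normed_vector) \<Rightarrow> ('a \<Rightarrow> 'a \<Rightarrow> 'b) \<Rightarrow> bool" where
  "C1_deriv_on S f f' \<longleftrightarrow>
     (\<forall>z\<in>S. (f has_derivative f' z) (at z)) \<and> (\<forall>u. continuous_on S (\<lambda>z. f' z u))"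

lemma C1_on_imp_C1_deriv_on: "C1_on S f \<Longrightarrow> C1_deriv_on S f (\<lambda>z. frechet_derivative f (at z))"
  unfolding C1_on_def C1_deriv_on_def using frechet_derivative_works by blast

lemma C1_deriv_onD: "C1_deriv_on S f f' \<Longrightarrow> z \<in> S \<Longrightarrow> (f has_derivative f' z) (at z)"
  unfolding C1_deriv_on_def by blast

lemma C1_deriv_on_continuous_on: "C1_deriv_on S f f' \<Longrightarrow> continuous_on S f"
  unfolding C1_deriv_on_def
  by (meson continuous_at_imp_continuous_on has_derivative_continuous)

lemma C1_deriv_on_const: "C1_deriv_on S (\<lambda>z. a) (\<lambda>z h. 0)"
  unfolding C1_deriv_on_def by (auto intro!: derivative_intros continuous_intros)

lemma C1_deriv_on_add:
  "C1_deriv_on S f f' \<Longrightarrow> C1_deriv_on S g g' \<Longrightarrow>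
     C1_deriv_on S (\<lambda>z. f z + g z) (\<lambda>z h. f' z h + g' z h)"
  unfolding C1_deriv_on_def by (auto intro!: derivative_intros continuous_intros)

lemma C1_deriv_on_scaleR:
  fixes f :: "_ \<Rightarrow> real"
  assumes "C1_deriv_on S f f'" "C1_deriv_on S g g'"
  shows "C1_deriv_on S (\<lambda>z. f z *\<^sub>R g z) (\<lambda>z h. f z *\<^sub>R g' z h + f' z h *\<^sub>R g z)"
  using assms C1_deriv_on_continuous_on[OF assms(1)] C1_deriv_on_continuous_on[OF assms(2)]
  unfolding C1_deriv_on_def by (auto intro!: derivative_intros continuous_intros)

lemma C1_deriv_on_mult:
  fixes f g :: "_ \<Rightarrow> real"
  assumes "C1_deriv_on S f f'" "C1_deriv_on S g g'"
  shows "C1_deriv_on S (\<lambda>z. f z * g z) (\<lambda>z h. f z * g' z h + f' z h * g z)"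
  using C1_deriv_on_scaleR[OF assms] by simp

lemma C1_deriv_on_inner:
  assumes "C1_deriv_on S f f'" "C1_deriv_on S g g'"
  shows "C1_deriv_on S (\<lambda>z. f z \<bullet> g z) (\<lambda>z h. f z \<bullet> g' z h + f' z h \<bullet> g z)"
  using assms C1_deriv_on_continuous_on[OF assms(1)] C1_deriv_on_continuous_on[OF assms(2)]
  unfolding C1_deriv_on_def by (auto intro!: derivative_intros continuous_intros)

lemma C1_deriv_on_cong:
  assumes "C1_deriv_on S f f'" "open S" "\<And>z. z \<in> S \<Longrightarrow> f z = g z"
  shows "C1_deriv_on S g f'"
  using assms unfolding C1_deriv_on_def by (metis has_derivative_transform_within_open)

lemma C1_deriv_on_continuous_on_derivative:
  fixes f :: "'a::euclidean_space \<Rightarrow> 'b::real_normed_vector"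
  assumes f: "C1_deriv_on S f f'"
  shows "continuous_on (S \<times> UNIV) (\<lambda>(z, u). f' z u)"
proof -
  have expand: "f' z u = (\<Sum>b\<in>Basis. (u \<bullet> b) *\<^sub>R f' z b)" if "z \<in> S" for z u
  proof -
    interpret linear "f' z"
      using C1_deriv_onD[OF f that] has_derivative_linear by blast
    show ?thesis
      by (simp add: euclidean_representation sum[symmetric] scale[symmetric])
  qed
  have "continuous_on (S \<times> UNIV) (\<lambda>w. f' (fst w) b)" for b
  proof (rule continuous_on_compose2[where g="\<lambda>z. f' z b"])
    show "continuous_on S (\<lambda>z. f' z b)"
      using f unfolding C1_deriv_on_def by blast
  qed (auto intro: continuous_on_fst continuous_on_id)
  then have "continuous_on (S \<times> UNIV) (\<lambda>w. \<Sum>b\<in>Basis. (snd w \<bullet> b) *\<^sub>R f' (fst w) b)"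
    by (intro continuous_intros)
  then show ?thesis
    by (rule continuous_on_eq) (auto simp: expand split_beta)
qed

lemma has_derivative_partial_space:
  assumes "((\<lambda>(s, y). F s y) has_derivative F') (at (t, x))"
  shows "(F t has_derivative (\<lambda>u. F' (0, u))) (at x)"
proof -
  have "((\<lambda>(s, y). F s y) \<circ> (\<lambda>y. (t, y)) has_derivative F' \<circ> (\<lambda>u. (0, u))) (at x)"
    by (rule diff_chain_at) (use assms in \<open>auto intro!: derivative_eq_intros\<close>)
  then show ?thesis by (simp add: o_def)
qed

lemma has_vector_derivative_partial_time:
  assumes "((\<lambda>(s, y). F s y) has_derivative F') (at (t, x))"
  shows "((\<lambda>s. F s x) has_vector_derivative F' (1, 0)) (at t)"
proof -
  have "((\<lambda>s. (s, x)) has_vector_derivative (1, 0)) (at t)"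
    by (auto intro!: derivative_eq_intros)
  from vector_derivative_diff_chain_within[OF this has_derivative_at_withinI[OF assms]]
  show ?thesis by (simp add: o_def)
qed

lemma pt_eq_partial:
  "((\<lambda>(s, y). F s y) has_derivative F') (at (t, x)) \<Longrightarrow> pt F t x = F' (1, 0)"
  unfolding pt_def by (rule vector_derivative_at[OF has_vector_derivative_partial_time])

lemma C1_on_differentiable_partial_space:
  assumes "C1_on (T \<times> UNIV) (\<lambda>(t, x). F t x)" "t \<in> T"
  shows "F t differentiable at x"
proof -
  have "((\<lambda>(t, x). F t x) has_derivative frechet_derivative (\<lambda>(t, x). F t x) (at (t, x))) (at (t, x))"
    using assms frechet_derivative_works unfolding C1_on_def by blast
  from has_derivative_partial_space[OF this] show ?thesis
    unfolding differentiable_def by blast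
qed

lemma has_vector_derivative_partials:
  fixes c :: "real \<Rightarrow> real \<Rightarrow> 'a::real_normed_vector"
  assumes "(\<lambda>(t, s). c t s) differentiable at (\<tau>, s)"
  shows "(c \<tau> has_vector_derivative vector_derivative (c \<tau>) (at s)) (at s)"
    and "((\<lambda>t. c t s) has_vector_derivative pt c \<tau> s) (at \<tau>)"
proof -
  obtain c' where c': "((\<lambda>(t, s). c t s) has_derivative c') (at (\<tau>, s))"
    using assms unfolding differentiable_def by blast
  have "c \<tau> differentiable at s"
    using has_derivative_partial_space[OF c'] unfolding differentiable_def by blast
  then show "(c \<tau> has_vector_derivative vector_derivative (c \<tau>) (at s)) (at s)"
    by (simp add: vector_derivative_works)
  have "(\<lambda>t. c t s) differentiable at \<tau>"
    using has_vector_derivative_partial_time[OF c'] differentiableI_vector by blast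
  then show "((\<lambda>t. c t s) has_vector_derivative pt c \<tau> s) (at \<tau>)"
    unfolding pt_def by (simp add: vector_derivative_works)
qed

lemma has_vector_derivative_compose_at:
  assumes "(F has_derivative F') (at (g x))" "(g has_vector_derivative g') (at x)"
  shows "((\<lambda>y. F (g y)) has_vector_derivative F' g') (at x)"
  using vector_derivative_diff_chain_within[OF assms(2), of F F'] assms(1)
  by (simp add: o_def has_derivative_at_withinI)

lemma dirD_eq:
  assumes "(F has_derivative F') (at x)"
  shows "dirD F x u = F' u"
proof -
  have "((\<lambda>h. x + h *\<^sub>R u) has_vector_derivative u) (at 0)"
    by (auto intro!: derivative_eq_intros)
  from vector_derivative_diff_chain_within[OF this has_derivative_at_withinI[of F]] assms
  show ?thesis unfolding dirD_def by (simp add: o_def vector_derivative_at)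
qed

lemma linear_vec_expansion:
  fixes u :: "real^'n"
  assumes "linear f"
  shows "f u = (\<Sum>i\<in>UNIV. (u $ i) *\<^sub>R f (axis i 1))"
proof -
  have "f u = f (\<Sum>i\<in>UNIV. (u $ i) *\<^sub>R axis i 1)"
    using basis_expansion[of u] by (simp add: scalar_mult_eq_scaleR)
  also have "\<dots> = (\<Sum>i\<in>UNIV. (u $ i) *\<^sub>R f (axis i 1))"
    by (simp add: linear_sum[OF assms] linear_cmul[OF assms])
  finally show ?thesis .
qed

lemma grad_inner_eq:
  assumes "(f has_derivative f') (at x)"
  shows "grad f x \<bullet> u = f' u"
proof -
  have "grad f x \<bullet> u = (\<Sum>i\<in>UNIV. (u $ i) * f' (axis i 1))"
    unfolding grad_def inner_vec_def dirD_eq[OF assms] by (simp add: mult.commute)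
  also have "\<dots> = f' u"
    using linear_vec_expansion[OF has_derivative_linear[OF assms], of u] by simp
  finally show ?thesis .
qed

lemma gradT_inner_eq:
  assumes "(V has_derivative V') (at x)"
  shows "gradT V x M \<bullet> u = M \<bullet> V' u"
proof -
  have "gradT V x M \<bullet> u = M \<bullet> (\<Sum>i\<in>UNIV. (u $ i) *\<^sub>R V' (axis i 1))"
    unfolding gradT_def inner_vec_def[of _ u] dirD_eq[OF assms]
    by (simp add: inner_sum_right mult.commute)
  also have "\<dots> = M \<bullet> V' u"
    using linear_vec_expansion[OF has_derivative_linear[OF assms], of u] by simp
  finally show ?thesis .
qed

lemma vector_derivative_compose_eq_grad:
  assumes "f differentiable at (\<gamma> s)" "(\<gamma> has_vector_derivative \<gamma>') (at s)"
  shows "vector_derivative (\<lambda>r. f (\<gamma> r)) (at s) = grad f (\<gamma> s) \<bullet> \<gamma>'"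
proof -
  obtain f' where f': "(f has_derivative f') (at (\<gamma> s))"
    using assms(1) unfolding differentiable_def by blast
  show ?thesis
    using vector_derivative_at[OF has_vector_derivative_compose_at[OF f' assms(2)]] grad_inner_eq[OF f']
    by simp
qed

section \<open>Parameter integrals\<close>

text \<open>No integrability of g is needed: if g is not integrable, neither is f - g, and both
  integrals are 0 by convention.\<close>
lemma integral_diff_has_integral_0:
  assumes "(f has_integral 0) S"
  shows "integral S (\<lambda>x. f x - g x) = - integral S g"
proof (cases "g integrable_on S")
  case True
  then show ?thesis
    using assms by (simp add: integral_diff has_integral_integrable integral_unique)
next
  case False
  have "\<not> (\<lambda>x. f x - g x) integrable_on S"
  proof
    assume "(\<lambda>x. f x - g x) integrable_on S"
    from integrable_diff[OF has_integral_integrable[OF assms] this] False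
    show False
      by simp
  qed
  with False show ?thesis
    by (simp add: not_integrable_integral)
qed

lemma leibniz_rule_vector_derivative_open:
  fixes f :: "real \<Rightarrow> real \<Rightarrow> 'b::banach"
  assumes T: "open T" "t \<in> T"
    and f_t: "\<And>\<tau> s. \<tau> \<in> T \<Longrightarrow> s \<in> {a..b} \<Longrightarrow> ((\<lambda>\<tau>. f \<tau> s) has_vector_derivative f_t \<tau> s) (at \<tau>)"
    and f_int: "\<And>\<tau>. \<tau> \<in> T \<Longrightarrow> f \<tau> integrable_on {a..b}"
    and f_t_cont: "continuous_on (T \<times> {a..b}) (\<lambda>(\<tau>, s). f_t \<tau> s)"
  shows "((\<lambda>\<tau>. integral {a..b} (f \<tau>)) has_vector_derivative integral {a..b} (f_t t)) (at t)"
proof -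
  obtain e where e: "e > 0" "ball t e \<subseteq> T"
    using T openE by blast
  have "((\<lambda>\<tau>. integral (cbox a b) (f \<tau>)) has_vector_derivative integral (cbox a b) (f_t t))
      (at t within ball t e)"
  proof (rule leibniz_rule_vector_derivative)
    show "((\<lambda>\<tau>. f \<tau> s) has_vector_derivative f_t \<tau> s) (at \<tau> within ball t e)"
      if "\<tau> \<in> ball t e" "s \<in> cbox a b" for \<tau> s
    proof -
      have "\<tau> \<in> T"
        using that e(2) by auto
      then show ?thesis
        using that f_t[of \<tau> s] by (simp add: has_vector_derivative_at_within)
    qed
    show "f \<tau> integrable_on cbox a b" if "\<tau> \<in> ball t e" for \<tau>
      using that e(2) f_int[of \<tau>] by auto
    show "continuous_on (ball t e \<times> cbox a b) (\<lambda>(\<tau>, s). f_t \<tau> s)"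
      using e(2) by (intro continuous_on_subset[OF f_t_cont]) auto
  qed (use e in auto)
  moreover have "at t within ball t e = at t"
    using e(1) by (intro at_within_open) auto
  ultimately show ?thesis
    by (simp only: cbox_interval)
qed

lemma integral_mixed_partial:
  fixes c :: "real \<Rightarrow> real \<Rightarrow> 'a::banach"
  assumes T: "open T" "\<tau> \<in> T"
    and c_s: "\<And>t s. t \<in> T \<Longrightarrow> (c t has_vector_derivative A t s) (at s)"
    and c_t: "\<And>t s. t \<in> T \<Longrightarrow> ((\<lambda>t. c t s) has_vector_derivative B t s) (at t)"
    and A_t: "\<And>t s. t \<in> T \<Longrightarrow> ((\<lambda>t. A t s) has_vector_derivative P t s) (at t)"
    and P_cont: "continuous_on (T \<times> UNIV) (\<lambda>(t, s). P t s)"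
    and "a \<le> x"
  shows "integral {a..x} (P \<tau>) = B \<tau> x - B \<tau> a"
proof -
  have A_integral: "(A t has_integral c t x - c t a) {a..x}" if "t \<in> T" for t
    using that \<open>a \<le> x\<close> c_s
    by (intro fundamental_theorem_of_calculus) (auto intro: has_vector_derivative_at_within)
  have "((\<lambda>t. integral {a..x} (A t)) has_vector_derivative integral {a..x} (P \<tau>)) (at \<tau>)"
  proof (rule leibniz_rule_vector_derivative_open[OF T])
    show "A t integrable_on {a..x}" if "t \<in> T" for t
      using A_integral[OF that] by blast
    show "continuous_on (T \<times> {a..x}) (\<lambda>(t, s). P t s)"
      by (rule continuous_on_subset[OF P_cont]) auto
  qed (use A_t in auto)
  then have "((\<lambda>t. c t x - c t a) has_vector_derivative integral {a..x} (P \<tau>)) (at \<tau>)"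
    by (rule has_vector_derivative_transform_within_open[OF _ T])
       (use A_integral in \<open>simp add: integral_unique\<close>)
  moreover have "((\<lambda>t. c t x - c t a) has_vector_derivative B \<tau> x - B \<tau> a) (at \<tau>)"
    using c_t[OF T(2)] by (intro derivative_intros)
  ultimately show ?thesis
    using vector_derivative_unique_at by blast
qed

lemma mixed_partials_eq:
  fixes c :: "real \<Rightarrow> real \<Rightarrow> 'a::banach"
  assumes T: "open T" "\<tau> \<in> T"
    and c_s: "\<And>t s. t \<in> T \<Longrightarrow> (c t has_vector_derivative A t s) (at s)"
    and c_t: "\<And>t s. t \<in> T \<Longrightarrow> ((\<lambda>t. c t s) has_vector_derivative B t s) (at t)"
    and A_t: "\<And>t s. t \<in> T \<Longrightarrow> ((\<lambda>t. A t s) has_vector_derivative P t s) (at t)"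
    and P_cont: "continuous_on (T \<times> UNIV) (\<lambda>(t, s). P t s)"
    and B_s: "(B \<tau> has_vector_derivative Q) (at s)"
  shows "P \<tau> s = Q"
proof -
  define a where "a = s - 1"
  have "a < s"
    by (simp add: a_def)
  have P_cont_\<tau>: "continuous_on UNIV (P \<tau>)"
    by (rule continuous_on_compose2[OF P_cont, where f="\<lambda>r. (\<tau>, r)", simplified])
       (use T in \<open>auto intro!: continuous_intros\<close>)
  have "((\<lambda>x. integral {a..x} (P \<tau>)) has_vector_derivative P \<tau> s) (at s within {a..s + 1})"
    using \<open>a < s\<close> continuous_on_subset[OF P_cont_\<tau>, of "{a..s + 1}"]
    by (intro integral_has_vector_derivative) auto
  moreover have "at s within {a..s + 1} = at s"
    using \<open>a < s\<close> by (intro at_within_interior) simp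
  ultimately have "((\<lambda>x. integral {a..x} (P \<tau>)) has_vector_derivative P \<tau> s) (at s)"
    by simp
  then have "((\<lambda>x. B \<tau> x - B \<tau> a) has_vector_derivative P \<tau> s) (at s)"
    by (rule has_vector_derivative_transform_within_open[where S="{a<..}"])
       (use \<open>a < s\<close> integral_mixed_partial[OF T c_s c_t A_t P_cont] in auto)
  moreover have "((\<lambda>x. B \<tau> x - B \<tau> a) has_vector_derivative Q) (at s)"
    using B_s by (intro derivative_eq_intros) auto
  ultimately show ?thesis
    using vector_derivative_unique_at by blast
qed

section \<open>Loops carried by a velocity field\<close>

locale material_loop =
  fixes T :: "real set"
    and V :: "real \<times> 'a::euclidean_space \<Rightarrow> 'a"
    and V' :: "real \<times> 'a \<Rightarrow> real \<times> 'a \<Rightarrow> 'a"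
    and c :: "real \<Rightarrow> real \<Rightarrow> 'a"
  assumes T_open: "open T"
    and V_C1: "C1_deriv_on (T \<times> UNIV) V V'"
    and c_C1: "C1_on (T \<times> UNIV) (\<lambda>(t, s). c t s)"
    and tangent_C1: "C1_on (T \<times> UNIV) (\<lambda>(t, s). vector_derivative (c t) (at s))"
    and closed: "\<And>t. t \<in> T \<Longrightarrow> c t 0 = c t 1"
    and moves: "\<And>t s. t \<in> T \<Longrightarrow> pt c t s = V (t, c t s)"
begin

abbreviation tangent :: "real \<Rightarrow> real \<Rightarrow> 'a" where
  "tangent t s \<equiv> vector_derivative (c t) (at s)"

lemma loop_has_vector_derivative:
  assumes "\<tau> \<in> T"
  shows "(c \<tau> has_vector_derivative tangent \<tau> s) (at s)"
    and "((\<lambda>t. c t s) has_vector_derivative V (\<tau>, c \<tau> s)) (at \<tau>)"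
proof -
  have "(\<lambda>(t, s). c t s) differentiable at (\<tau>, s)"
    using c_C1 assms unfolding C1_on_def by auto
  from has_vector_derivative_partials[OF this] moves[OF assms]
  show "(c \<tau> has_vector_derivative tangent \<tau> s) (at s)"
    and "((\<lambda>t. c t s) has_vector_derivative V (\<tau>, c \<tau> s)) (at \<tau>)"
    by simp_all
qed

lemma field_along_loop_has_vector_derivative:
  assumes F: "C1_deriv_on (T \<times> UNIV) F F'" and "\<tau> \<in> T"
  shows "((\<lambda>r. F (\<tau>, c \<tau> r)) has_vector_derivative F' (\<tau>, c \<tau> s) (0, tangent \<tau> s)) (at s)"
    and "((\<lambda>t. F (t, c t s)) has_vector_derivative F' (\<tau>, c \<tau> s) (1, V (\<tau>, c \<tau> s))) (at \<tau>)"
  using assms loop_has_vector_derivative[OF \<open>\<tau> \<in> T\<close>]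
  by (auto intro!: has_vector_derivative_compose_at[OF C1_deriv_onD[OF F]] derivative_eq_intros)

lemma tangent_has_vector_derivative:
  assumes "\<tau> \<in> T"
  shows "((\<lambda>t. tangent t s) has_vector_derivative V' (\<tau>, c \<tau> s) (0, tangent \<tau> s)) (at \<tau>)"
proof -
  obtain W' where W': "C1_deriv_on (T \<times> UNIV) (\<lambda>(t, s). tangent t s) W'"
    using C1_on_imp_C1_deriv_on[OF tangent_C1] by blast
  have W'_t: "((\<lambda>t. tangent t s) has_vector_derivative W' (t, s) (1, 0)) (at t)" if "t \<in> T" for t s
    using has_vector_derivative_partial_time[OF C1_deriv_onD[OF W']] that by auto
  have "W' (\<tau>, s) (1, 0) = V' (\<tau>, c \<tau> s) (0, tangent \<tau> s)"
  proof (rule mixed_partials_eq[OF T_open assms, where c=c and A=tangent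
        and B="\<lambda>t s. V (t, c t s)" and P="\<lambda>t s. W' (t, s) (1, 0)"])
    show "continuous_on (T \<times> UNIV) (\<lambda>(t, s). W' (t, s) (1, 0))"
      using W' unfolding C1_deriv_on_def by (simp add: case_prod_beta')
    show "((\<lambda>r. V (\<tau>, c \<tau> r)) has_vector_derivative V' (\<tau>, c \<tau> s) (0, tangent \<tau> s)) (at s)"
      using field_along_loop_has_vector_derivative(1)[OF V_C1 assms] .
  qed (use loop_has_vector_derivative W'_t in auto)
  then show ?thesis
    using W'_t[OF assms, of s] by simp
qed

lemma exact_circulation_eq_0:
  fixes F :: "real \<times> 'a \<Rightarrow> 'b::banach"
  assumes F: "C1_deriv_on (T \<times> UNIV) F F'" and "\<tau> \<in> T"
  shows "((\<lambda>s. F' (\<tau>, c \<tau> s) (0, tangent \<tau> s)) has_integral 0) {0..1}"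
proof -
  have "((\<lambda>s. F' (\<tau>, c \<tau> s) (0, tangent \<tau> s)) has_integral F (\<tau>, c \<tau> 1) - F (\<tau>, c \<tau> 0)) {0..1}"
    using field_along_loop_has_vector_derivative(1)[OF assms]
    by (intro fundamental_theorem_of_calculus[of 0 1 "\<lambda>r. F (\<tau>, c \<tau> r)", simplified])
       (auto intro: has_vector_derivative_at_within)
  then show ?thesis
    using closed[OF \<open>\<tau> \<in> T\<close>] by simp
qed

lemma continuous_on_along_loop:
  fixes F :: "real \<times> 'a \<Rightarrow> 'b::real_normed_vector"
  assumes F: "C1_deriv_on (T \<times> UNIV) F F'"
  shows "continuous_on (T \<times> UNIV) (\<lambda>w. F (fst w, c (fst w) (snd w)))"
    and "continuous_on (T \<times> UNIV) h \<Longrightarrow>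
      continuous_on (T \<times> UNIV) (\<lambda>w. F' (fst w, c (fst w) (snd w)) (h w))"
proof -
  have g: "continuous_on (T \<times> UNIV) (\<lambda>w. (fst w, c (fst w) (snd w)))"
    using C1_deriv_on_continuous_on[OF C1_on_imp_C1_deriv_on[OF c_C1]]
    by (auto simp: split_beta intro!: continuous_intros)
  have g_image: "(\<lambda>w. (fst w, c (fst w) (snd w))) ` (T \<times> UNIV) \<subseteq> T \<times> UNIV"
    by auto
  show "continuous_on (T \<times> UNIV) (\<lambda>w. F (fst w, c (fst w) (snd w)))"
    using continuous_on_compose2[OF C1_deriv_on_continuous_on[OF F] g g_image] .
  show "continuous_on (T \<times> UNIV) (\<lambda>w. F' (fst w, c (fst w) (snd w)) (h w))"
    if "continuous_on (T \<times> UNIV) h"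
    using continuous_on_compose2[OF C1_deriv_on_continuous_on_derivative[OF F]
        continuous_on_Pair[OF g that]] g_image
    by auto
qed

lemma continuous_on_tangent: "continuous_on (T \<times> UNIV) (\<lambda>w. tangent (fst w) (snd w))"
  using C1_deriv_on_continuous_on[OF C1_on_imp_C1_deriv_on[OF tangent_C1]] by (simp add: split_beta)

lemma continuous_on_circulation_integrand:
  assumes m: "C1_deriv_on (T \<times> UNIV) m m'"
  shows "continuous_on (T \<times> UNIV) (\<lambda>(\<tau>, s). m (\<tau>, c \<tau> s) \<bullet> tangent \<tau> s)"
    and "continuous_on (T \<times> UNIV) (\<lambda>(\<tau>, s). m' (\<tau>, c \<tau> s) (1, V (\<tau>, c \<tau> s)) \<bullet> tangent \<tau> s
                                       + m (\<tau>, c \<tau> s) \<bullet> V' (\<tau>, c \<tau> s) (0, tangent \<tau> s))"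
proof -
  show "continuous_on (T \<times> UNIV) (\<lambda>(\<tau>, s). m (\<tau>, c \<tau> s) \<bullet> tangent \<tau> s)"
    unfolding split_beta
    by (intro continuous_intros continuous_on_tangent continuous_on_along_loop(1)[OF m])
  have "continuous_on (T \<times> UNIV) (\<lambda>w. m' (fst w, c (fst w) (snd w)) (1, V (fst w, c (fst w) (snd w))))"
    by (rule continuous_on_along_loop(2)[OF m])
       (intro continuous_intros continuous_on_along_loop(1)[OF V_C1])
  moreover have
    "continuous_on (T \<times> UNIV) (\<lambda>w. V' (fst w, c (fst w) (snd w)) (0, tangent (fst w) (snd w)))"
    by (rule continuous_on_along_loop(2)[OF V_C1]) (intro continuous_intros continuous_on_tangent)
  ultimately show "continuous_on (T \<times> UNIV) (\<lambda>(\<tau>, s). m' (\<tau>, c \<tau> s) (1, V (\<tau>, c \<tau> s)) \<bullet> tangent \<tau> s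
                                       + m (\<tau>, c \<tau> s) \<bullet> V' (\<tau>, c \<tau> s) (0, tangent \<tau> s))"
    unfolding split_beta
    by (intro continuous_intros continuous_on_tangent continuous_on_along_loop(1)[OF m])
qed

lemma circulation_has_real_derivative:
  assumes m: "C1_deriv_on (T \<times> UNIV) m m'" and "t \<in> T"
  shows "((\<lambda>\<tau>. integral {0..1} (\<lambda>s. m (\<tau>, c \<tau> s) \<bullet> tangent \<tau> s)) has_real_derivative
      integral {0..1} (\<lambda>s. m' (t, c t s) (1, V (t, c t s)) \<bullet> tangent t s
                           + m (t, c t s) \<bullet> V' (t, c t s) (0, tangent t s))) (at t)"
proof -
  have deriv: "((\<lambda>\<tau>. m (\<tau>, c \<tau> s) \<bullet> tangent \<tau> s) has_vector_derivative
      m' (\<tau>, c \<tau> s) (1, V (\<tau>, c \<tau> s)) \<bullet> tangent \<tau> s + m (\<tau>, c \<tau> s) \<bullet> V' (\<tau>, c \<tau> s) (0, tangent \<tau> s))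
      (at \<tau>)" if "\<tau> \<in> T" for \<tau> s
    using bounded_bilinear.has_vector_derivative[OF bounded_bilinear_inner
        field_along_loop_has_vector_derivative(2)[OF m that] tangent_has_vector_derivative[OF that]]
    by (simp add: add.commute)
  have integrable: "(\<lambda>s. m (\<tau>, c \<tau> s) \<bullet> tangent \<tau> s) integrable_on {0..1}" if "\<tau> \<in> T" for \<tau>
  proof -
    have "continuous_on {0..1} (\<lambda>s. (\<lambda>(\<tau>, s). m (\<tau>, c \<tau> s) \<bullet> tangent \<tau> s) (\<tau>, s))"
      by (rule continuous_on_compose2[OF continuous_on_circulation_integrand(1)[OF m]])
         (use that in \<open>auto intro: continuous_intros\<close>)
    then show ?thesis
      by (simp add: integrable_continuous_real)
  qed
  have cont: "continuous_on (T \<times> {0..1}) (\<lambda>(\<tau>, s).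
      m' (\<tau>, c \<tau> s) (1, V (\<tau>, c \<tau> s)) \<bullet> tangent \<tau> s + m (\<tau>, c \<tau> s) \<bullet> V' (\<tau>, c \<tau> s) (0, tangent \<tau> s))"
    by (rule continuous_on_subset[OF continuous_on_circulation_integrand(2)[OF m]]) auto
  show ?thesis
    using leibniz_rule_vector_derivative_open[OF T_open \<open>t \<in> T\<close> deriv integrable cont]
    by (simp add: has_real_derivative_iff_has_vector_derivative)
qed

end

section \<open>The wave-current model\<close>

lemma dL_dv_formula:
  "dL_dv \<sigma> Fr \<rho>ref vv zt gz z Dd r pp = (Dd * r) *\<^sub>R (vv + (\<sigma>^2 * (zt + vv \<bullet> gz)) *\<^sub>R gz)"
proof -
  have d: "((\<lambda>u. Lden \<sigma> Fr \<rho>ref u zt gz z Dd r pp) has_derivative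
     (\<lambda>h. (1/2 * (vv \<bullet> h + h \<bullet> vv + \<sigma>^2 * (2 * (zt + vv \<bullet> gz) * (h \<bullet> gz)))) * Dd * r)) (at vv)"
    unfolding Lden_def by (auto intro!: derivative_eq_intros simp: power2_eq_square algebra_simps)
  show ?thesis
    unfolding dL_dv_def dirD_eq[OF d]
    by (simp add: vec_eq_iff inner_axis inner_commute inner_axis' algebra_simps)
qed

lemma dL_dD_formula:
  "dL_dD \<sigma> Fr \<rho>ref vv zt gz z Dd r pp =
     (1/2 * (vv \<bullet> vv + \<sigma>^2 * (zt + vv \<bullet> gz)^2) - \<rho>ref / r * z^2 / (2 * Fr^2)) * r - pp"
  unfolding dL_dD_def Lden_def by (rule DERIV_imp_deriv) (auto intro!: derivative_eq_intros)

lemma dL_drho_formula: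
  assumes "r \<noteq> 0"
  shows "dL_drho \<sigma> Fr \<rho>ref vv zt gz z Dd r pp = 1/2 * (vv \<bullet> vv + \<sigma>^2 * (zt + vv \<bullet> gz)^2) * Dd"
  unfolding dL_drho_def
proof (rule DERIV_imp_deriv, rule has_field_derivative_transform_within_open)
  let ?K = "1/2 * (vv \<bullet> vv + \<sigma>^2 * (zt + vv \<bullet> gz)^2)"
  show "((\<lambda>s. ?K * Dd * s - \<rho>ref * z^2 / (2 * Fr^2) * Dd - pp * (Dd - 1))
      has_field_derivative ?K * Dd) (at r)"
    by (auto intro!: derivative_eq_intros)
  show "?K * Dd * s - \<rho>ref * z^2 / (2 * Fr^2) * Dd - pp * (Dd - 1) = Lden \<sigma> Fr \<rho>ref vv zt gz z Dd s pp"
    if "s \<in> - {0}" for s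
    using that unfolding Lden_def by (simp add: field_simps)
qed (use assms in auto)

locale wave_current =
  fixes \<sigma> Fr \<rho>ref :: real
    and T :: "real set"
    and v :: "real \<Rightarrow> real^2 \<Rightarrow> real^2"
    and \<zeta> D \<rho> p :: "real \<Rightarrow> real^2 \<Rightarrow> real"
  assumes T_open: "open T"
    and Fr_nz: "Fr \<noteq> 0"
    and rho_pos: "\<And>t x. t \<in> T \<Longrightarrow> \<rho> t x > 0"
    and v_C1: "C1_on (T \<times> UNIV) (\<lambda>(t, x). v t x)"
    and zeta_C1: "C1_on (T \<times> UNIV) (\<lambda>(t, x). \<zeta> t x)"
    and zeta_t_C1: "C1_on (T \<times> UNIV) (\<lambda>(t, x). pt \<zeta> t x)"
    and zeta_x_C1: "C1_on (T \<times> UNIV) (\<lambda>(t, x). grad (\<zeta> t) x)"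
    and rho_C1: "C1_on (T \<times> UNIV) (\<lambda>(t, x). \<rho> t x)"
    and p_C1: "C1_on (T \<times> UNIV) (\<lambda>(t, x). p t x)"
    and D_adv: "\<And>t x. t \<in> T \<Longrightarrow> pt D t x + div2 (\<lambda>y. D t y *\<^sub>R v t y) x = 0"
    and rho_adv: "\<And>t x. t \<in> T \<Longrightarrow> pt \<rho> t x + v t x \<bullet> grad (\<rho> t) x = 0"
    and D_one: "\<And>t x. t \<in> T \<Longrightarrow> D t x = 1"
    and EP: "\<And>t x. t \<in> T \<Longrightarrow>
      (let M = (\<lambda>s y. dL_dv \<sigma> Fr \<rho>ref (v s y) (pt \<zeta> s y) (grad (\<zeta> s) y) (\<zeta> s y) (D s y) (\<rho> s y) (p s y));
           PD = (\<lambda>y. dL_dD \<sigma> Fr \<rho>ref (v t y) (pt \<zeta> t y) (grad (\<zeta> t) y) (\<zeta> t y) (D t y) (\<rho> t y) (p t y));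
           PR = dL_drho \<sigma> Fr \<rho>ref (v t x) (pt \<zeta> t x) (grad (\<zeta> t) x) (\<zeta> t x) (D t x) (\<rho> t x) (p t x)
       in pt M t x + dirD (M t) x (v t x) + gradT (v t) x (M t x) + div2 (v t) x *\<^sub>R M t x
          = D t x *\<^sub>R grad PD x - PR *\<^sub>R grad (\<rho> t) x)"
begin

definition vertical_velocity :: "real \<times> (real^2) \<Rightarrow> real" where
  "vertical_velocity = (\<lambda>(t, x). pt \<zeta> t x + v t x \<bullet> grad (\<zeta> t) x)"

definition momentum :: "real \<times> (real^2) \<Rightarrow> real^2" where
  "momentum = (\<lambda>(t, x). v t x + (\<sigma>^2 * vertical_velocity (t, x)) *\<^sub>R grad (\<zeta> t) x)"

definition kinetic_energy :: "real \<times> (real^2) \<Rightarrow> real" where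
  "kinetic_energy = (\<lambda>(t, x). 1/2 * (v t x \<bullet> v t x + \<sigma>^2 * (vertical_velocity (t, x))^2))"

definition modified_pressure :: "real \<times> (real^2) \<Rightarrow> real" where
  "modified_pressure = (\<lambda>(t, x). p t x + \<rho>ref * (\<zeta> t x)^2 / (2 * Fr^2))"

lemma momentum_energy_pressure_C1:
  obtains m' K' P' where "C1_deriv_on (T \<times> UNIV) momentum m'"
    and "C1_deriv_on (T \<times> UNIV) kinetic_energy K'"
    and "C1_deriv_on (T \<times> UNIV) modified_pressure P'"
proof -
  have Z: "open (T \<times> (UNIV :: (real^2) set))"
    by (simp add: T_open open_Times)
  obtain V' Zt' G' Ze' Pr' where
    V': "C1_deriv_on (T \<times> UNIV) (\<lambda>(t, x). v t x) V'" and
    Zt': "C1_deriv_on (T \<times> UNIV) (\<lambda>(t, x). pt \<zeta> t x) Zt'" and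
    G': "C1_deriv_on (T \<times> UNIV) (\<lambda>(t, x). grad (\<zeta> t) x) G'" and
    Ze': "C1_deriv_on (T \<times> UNIV) (\<lambda>(t, x). \<zeta> t x) Ze'" and
    Pr': "C1_deriv_on (T \<times> UNIV) (\<lambda>(t, x). p t x) Pr'"
    using C1_on_imp_C1_deriv_on[OF v_C1] C1_on_imp_C1_deriv_on[OF zeta_t_C1]
      C1_on_imp_C1_deriv_on[OF zeta_x_C1] C1_on_imp_C1_deriv_on[OF zeta_C1]
      C1_on_imp_C1_deriv_on[OF p_C1] by blast
  obtain W' where W': "C1_deriv_on (T \<times> UNIV) vertical_velocity W'"
    using C1_deriv_on_cong[where g=vertical_velocity,
        OF C1_deriv_on_add[OF Zt' C1_deriv_on_inner[OF V' G']] Z]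
    by (auto simp: vertical_velocity_def split_beta)
  obtain m' where "C1_deriv_on (T \<times> UNIV) momentum m'"
    using C1_deriv_on_cong[where g=momentum,
        OF C1_deriv_on_add[OF V' C1_deriv_on_scaleR[OF
          C1_deriv_on_mult[OF C1_deriv_on_const[of _ "\<sigma>^2"] W'] G']] Z]
    by (auto simp: momentum_def split_beta)
  moreover obtain K' where "C1_deriv_on (T \<times> UNIV) kinetic_energy K'"
    using C1_deriv_on_cong[where g=kinetic_energy,
        OF C1_deriv_on_mult[OF C1_deriv_on_const[of _ "1/2"] C1_deriv_on_add[OF
          C1_deriv_on_inner[OF V' V']
          C1_deriv_on_mult[OF C1_deriv_on_const[of _ "\<sigma>^2"] C1_deriv_on_mult[OF W' W']]]] Z]
    by (auto simp: kinetic_energy_def split_beta power2_eq_square)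
  moreover obtain P' where "C1_deriv_on (T \<times> UNIV) modified_pressure P'"
    using C1_deriv_on_cong[where g=modified_pressure,
        OF C1_deriv_on_add[OF Pr' C1_deriv_on_mult[OF
          C1_deriv_on_const[of _ "\<rho>ref / (2 * Fr^2)"] C1_deriv_on_mult[OF Ze' Ze']]] Z]
    by (auto simp: modified_pressure_def split_beta power2_eq_square)
  ultimately show thesis
    using that by blast
qed

lemma div_free: "t \<in> T \<Longrightarrow> div2 (v t) x = 0"
proof -
  assume "t \<in> T"
  have "((\<lambda>s. D s x) has_vector_derivative 0) (at t)"
    by (rule has_vector_derivative_transform_within_open[of "\<lambda>s. 1" 0 t T])
       (use T_open \<open>t \<in> T\<close> D_one in \<open>auto intro: derivative_intros\<close>)
  then have "pt D t x = 0"
    unfolding pt_def by (rule vector_derivative_at)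
  moreover have "(\<lambda>y. D t y *\<^sub>R v t y) = v t"
    using D_one[OF \<open>t \<in> T\<close>] by simp
  ultimately show ?thesis
    using D_adv[OF \<open>t \<in> T\<close>, of x] by simp
qed

definition dl_dv :: "real \<Rightarrow> real^2 \<Rightarrow> real^2" where
  "dl_dv = (\<lambda>t x. dL_dv \<sigma> Fr \<rho>ref (v t x) (pt \<zeta> t x) (grad (\<zeta> t) x) (\<zeta> t x) (D t x) (\<rho> t x) (p t x))"

definition dl_dD :: "real \<Rightarrow> real^2 \<Rightarrow> real" where
  "dl_dD = (\<lambda>t x. dL_dD \<sigma> Fr \<rho>ref (v t x) (pt \<zeta> t x) (grad (\<zeta> t) x) (\<zeta> t x) (D t x) (\<rho> t x) (p t x))"

definition dl_drho :: "real \<Rightarrow> real^2 \<Rightarrow> real" where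
  "dl_drho = (\<lambda>t x. dL_drho \<sigma> Fr \<rho>ref (v t x) (pt \<zeta> t x) (grad (\<zeta> t) x) (\<zeta> t x) (D t x) (\<rho> t x) (p t x))"

lemma EP_eq:
  "t \<in> T \<Longrightarrow> pt dl_dv t x + dirD (dl_dv t) x (v t x) + gradT (v t) x (dl_dv t x) + div2 (v t) x *\<^sub>R dl_dv t x
     = D t x *\<^sub>R grad (dl_dD t) x - dl_drho t x *\<^sub>R grad (\<rho> t) x"
  using EP unfolding Let_def dl_dv_def dl_dD_def dl_drho_def .

lemma dl_dv_eq_momentum: "t \<in> T \<Longrightarrow> dl_dv t x = \<rho> t x *\<^sub>R momentum (t, x)"
  using D_one by (simp add: dl_dv_def dL_dv_formula momentum_def vertical_velocity_def)

lemma dl_dD_eq: "t \<in> T \<Longrightarrow> dl_dD t x = kinetic_energy (t, x) * \<rho> t x - modified_pressure (t, x)"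
  using rho_pos[of t x] Fr_nz
  by (simp add: dl_dD_def dL_dD_formula kinetic_energy_def modified_pressure_def vertical_velocity_def
      field_simps)

lemma dl_drho_eq_kinetic_energy: "t \<in> T \<Longrightarrow> dl_drho t x = kinetic_energy (t, x)"
  using rho_pos[of t x] D_one
  by (simp add: dl_drho_def dL_drho_formula kinetic_energy_def vertical_velocity_def)

lemma rho_has_derivative:
  assumes "t \<in> T"
  obtains R' where "((\<lambda>(t, x). \<rho> t x) has_derivative R') (at (t, x))"
  using rho_C1 assms unfolding C1_on_def differentiable_def by blast

text \<open>The two terms with derivatives of \<rho> add up to its (vanishing) material derivative.\<close>
lemma material_derivative_dl_dv:
  assumes "\<tau> \<in> T" and m': "(momentum has_derivative m') (at (\<tau>, x))"
  shows "pt dl_dv \<tau> x + dirD (dl_dv \<tau>) x (v \<tau> x) = \<rho> \<tau> x *\<^sub>R m' (1, v \<tau> x)"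
proof -
  obtain R' where R': "((\<lambda>(t, x). \<rho> t x) has_derivative R') (at (\<tau>, x))"
    using rho_has_derivative[OF assms(1)] .
  have dM: "((\<lambda>(s, y). dl_dv s y) has_derivative
      (\<lambda>h. \<rho> \<tau> x *\<^sub>R m' h + R' h *\<^sub>R momentum (\<tau>, x))) (at (\<tau>, x))"
  proof (rule has_derivative_transform_within_open[where s="T \<times> UNIV"])
    show "((\<lambda>w. (\<lambda>(t, x). \<rho> t x) w *\<^sub>R momentum w) has_derivative
        (\<lambda>h. \<rho> \<tau> x *\<^sub>R m' h + R' h *\<^sub>R momentum (\<tau>, x))) (at (\<tau>, x))"
      using has_derivative_scaleR[OF R' m'] by simp
  qed (use T_open assms(1) in \<open>auto simp: open_Times dl_dv_eq_momentum\<close>)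
  then have "pt dl_dv \<tau> x + dirD (dl_dv \<tau>) x (v \<tau> x)
      = \<rho> \<tau> x *\<^sub>R (m' (1, 0) + m' (0, v \<tau> x)) + (R' (1, 0) + R' (0, v \<tau> x)) *\<^sub>R momentum (\<tau>, x)"
    using pt_eq_partial[OF dM] dirD_eq[OF has_derivative_partial_space[OF dM]]
    by (simp add: algebra_simps)
  moreover have "R' (1, 0) + R' (0, v \<tau> x) = 0"
    using rho_adv[OF assms(1), of x] pt_eq_partial[OF R']
      grad_inner_eq[OF has_derivative_partial_space[OF R']]
    by (simp add: inner_commute)
  moreover have "m' (1, v \<tau> x) = m' (1, 0) + m' (0, v \<tau> x)"
    using linear_add[OF has_derivative_linear[OF m'], of "(1, 0)" "(0, v \<tau> x)"] by simp
  ultimately show ?thesis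
    by simp
qed

lemma gradT_dl_dv_inner:
  assumes "\<tau> \<in> T" and V': "((\<lambda>(t, x). v t x) has_derivative V') (at (\<tau>, x))"
  shows "gradT (v \<tau>) x (dl_dv \<tau> x) \<bullet> C = \<rho> \<tau> x * (momentum (\<tau>, x) \<bullet> V' (0, C))"
  using gradT_inner_eq[OF has_derivative_partial_space[OF V']] dl_dv_eq_momentum[OF assms(1)] by simp

lemma EP_force_inner:
  assumes "\<tau> \<in> T"
    and K': "(kinetic_energy has_derivative K') (at (\<tau>, x))"
    and P': "(modified_pressure has_derivative P') (at (\<tau>, x))"
  shows "(D \<tau> x *\<^sub>R grad (dl_dD \<tau>) x - dl_drho \<tau> x *\<^sub>R grad (\<rho> \<tau>) x) \<bullet> C
    = \<rho> \<tau> x * K' (0, C) - P' (0, C)"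
proof -
  obtain R' where R': "((\<lambda>(t, x). \<rho> t x) has_derivative R') (at (\<tau>, x))"
    using rho_has_derivative[OF assms(1)] .
  define F where "F s y = kinetic_energy (s, y) * \<rho> s y - modified_pressure (s, y)" for s y
  have "((\<lambda>(s, y). F s y) has_derivative
      (\<lambda>h. kinetic_energy (\<tau>, x) * R' h + K' h * \<rho> \<tau> x - P' h)) (at (\<tau>, x))"
    unfolding F_def using has_derivative_diff[OF has_derivative_mult[OF K' R'] P']
    by (simp add: split_beta')
  moreover have "dl_dD \<tau> = F \<tau>"
    using dl_dD_eq[OF assms(1)] by (simp add: F_def fun_eq_iff)
  ultimately have
    "grad (dl_dD \<tau>) x \<bullet> C = kinetic_energy (\<tau>, x) * R' (0, C) + K' (0, C) * \<rho> \<tau> x - P' (0, C)"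
    using grad_inner_eq[OF has_derivative_partial_space] by simp
  moreover have "grad (\<rho> \<tau>) x \<bullet> C = R' (0, C)"
    using grad_inner_eq[OF has_derivative_partial_space[OF R']] .
  ultimately show ?thesis
    using D_one[OF assms(1)] dl_drho_eq_kinetic_energy[OF assms(1)]
    by (simp add: inner_diff_left algebra_simps)
qed

text \<open>The Euler-Poincare equation divided by \<rho> and tested against C, where m'(1, v) is
  the material derivative of the momentum m.\<close>
lemma EP_kelvin_form:
  assumes "\<tau> \<in> T"
    and V': "((\<lambda>(t, x). v t x) has_derivative V') (at (\<tau>, x))"
    and m': "(momentum has_derivative m') (at (\<tau>, x))"
    and K': "(kinetic_energy has_derivative K') (at (\<tau>, x))"
    and P': "(modified_pressure has_derivative P') (at (\<tau>, x))"
  shows "m' (1, v \<tau> x) \<bullet> C + momentum (\<tau>, x) \<bullet> V' (0, C) = K' (0, C) - P' (0, C) / \<rho> \<tau> x"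
proof -
  have "\<rho> \<tau> x * (m' (1, v \<tau> x) \<bullet> C + momentum (\<tau>, x) \<bullet> V' (0, C)) = \<rho> \<tau> x * K' (0, C) - P' (0, C)"
    using arg_cong[OF EP_eq[OF assms(1), of x], of "\<lambda>y. y \<bullet> C"]
    unfolding inner_add_left material_derivative_dl_dv[OF assms(1) m'] gradT_dl_dv_inner[OF assms(1) V']
      EP_force_inner[OF assms(1) K' P'] div_free[OF assms(1)]
    by (simp add: algebra_simps)
  then show ?thesis
    using rho_pos[OF assms(1), of x] by (simp add: field_simps)
qed

end

locale wave_current_loop =
  wave_current \<sigma> Fr \<rho>ref T v \<zeta> D \<rho> p + material_loop T "\<lambda>(t, x). v t x" V' c
  for \<sigma> Fr \<rho>ref T v \<zeta> D \<rho> p V' c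
begin

lemma circulation_integrand_eq:
  assumes "\<tau> \<in> T"
  shows "v \<tau> (c \<tau> s) \<bullet> tangent \<tau> s
      + \<sigma>^2 * (pt \<zeta> \<tau> (c \<tau> s) + v \<tau> (c \<tau> s) \<bullet> grad (\<zeta> \<tau>) (c \<tau> s))
          * vector_derivative (\<lambda>r. \<zeta> \<tau> (c \<tau> r)) (at s)
    = momentum (\<tau>, c \<tau> s) \<bullet> tangent \<tau> s"
  using vector_derivative_compose_eq_grad[OF C1_on_differentiable_partial_space[OF zeta_C1 assms]
      loop_has_vector_derivative(1)[OF assms]]
  by (simp add: momentum_def vertical_velocity_def inner_add_left)

lemma kelvin_circulation:
  assumes "t \<in> T"
  shows "((\<lambda>\<tau>. integral {0..1} (\<lambda>s.
        v \<tau> (c \<tau> s) \<bullet> tangent \<tau> s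
        + \<sigma>^2 * (pt \<zeta> \<tau> (c \<tau> s) + v \<tau> (c \<tau> s) \<bullet> grad (\<zeta> \<tau>) (c \<tau> s))
            * vector_derivative (\<lambda>r. \<zeta> \<tau> (c \<tau> r)) (at s)))
     has_real_derivative
       - integral {0..1} (\<lambda>s. (1 / \<rho> t (c t s)) *
            vector_derivative (\<lambda>r. p t (c t r) + \<rho>ref * (\<zeta> t (c t r))^2 / (2 * Fr^2)) (at s)))
    (at t)"
proof -
  obtain m' K' P' where m': "C1_deriv_on (T \<times> UNIV) momentum m'"
    and K': "C1_deriv_on (T \<times> UNIV) kinetic_energy K'"
    and P': "C1_deriv_on (T \<times> UNIV) modified_pressure P'"
    by (rule momentum_energy_pressure_C1)
  have "integral {0..1} (\<lambda>s. m' (t, c t s) (1, v t (c t s)) \<bullet> tangent t s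
                           + momentum (t, c t s) \<bullet> V' (t, c t s) (0, tangent t s))
      = integral {0..1} (\<lambda>s. K' (t, c t s) (0, tangent t s)
                           - P' (t, c t s) (0, tangent t s) / \<rho> t (c t s))"
    using EP_kelvin_form[OF assms C1_deriv_onD[OF V_C1] C1_deriv_onD[OF m'] C1_deriv_onD[OF K']
        C1_deriv_onD[OF P']] assms
    by simp
  also have "\<dots> = - integral {0..1} (\<lambda>s. (1 / \<rho> t (c t s)) *
            vector_derivative (\<lambda>r. p t (c t r) + \<rho>ref * (\<zeta> t (c t r))^2 / (2 * Fr^2)) (at s))"
    using integral_diff_has_integral_0[OF exact_circulation_eq_0[OF K' assms]]
      vector_derivative_at[OF field_along_loop_has_vector_derivative(1)[OF P' assms]]
    by (simp add: modified_pressure_def)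
  finally have "((\<lambda>\<tau>. integral {0..1} (\<lambda>s. momentum (\<tau>, c \<tau> s) \<bullet> tangent \<tau> s))
     has_real_derivative - integral {0..1} (\<lambda>s. (1 / \<rho> t (c t s)) *
            vector_derivative (\<lambda>r. p t (c t r) + \<rho>ref * (\<zeta> t (c t r))^2 / (2 * Fr^2)) (at s))) (at t)"
    using circulation_has_real_derivative[OF m' assms] by simp
  then show ?thesis
    by (rule has_field_derivative_transform_within_open[OF _ T_open assms])
       (simp add: circulation_integrand_eq)
qed

end

theorem mainTheorem1:
  fixes \<sigma> Fr \<rho>ref :: real
    and T :: "real set"
    and v :: "real \<Rightarrow> real^2 \<Rightarrow> real^2"
    and \<zeta> D \<rho> p :: "real \<Rightarrow> real^2 \<Rightarrow> real"
    and c :: "real \<Rightarrow> real \<Rightarrow> real^2"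
  assumes T_open: "open T"
    and Fr_nz: "Fr \<noteq> 0"
    and rho_pos: "\<And>t x. t \<in> T \<Longrightarrow> \<rho> t x > 0"
    and v_C1: "C1_on (T \<times> UNIV) (\<lambda>(t, x). v t x)"
    and zeta_C1: "C1_on (T \<times> UNIV) (\<lambda>(t, x). \<zeta> t x)"
    and zeta_t_C1: "C1_on (T \<times> UNIV) (\<lambda>(t, x). pt \<zeta> t x)"
    and zeta_x_C1: "C1_on (T \<times> UNIV) (\<lambda>(t, x). grad (\<zeta> t) x)"
    and D_C1: "C1_on (T \<times> UNIV) (\<lambda>(t, x). D t x)"
    and rho_C1: "C1_on (T \<times> UNIV) (\<lambda>(t, x). \<rho> t x)"
    and p_C1: "C1_on (T \<times> UNIV) (\<lambda>(t, x). p t x)"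
    \<comment> \<open>advection of D and rho, and the constraint D = 1 (from the multiplier p)\<close>
    and D_adv: "\<And>t x. t \<in> T \<Longrightarrow> pt D t x + div2 (\<lambda>y. D t y *\<^sub>R v t y) x = 0"
    and rho_adv: "\<And>t x. t \<in> T \<Longrightarrow> pt \<rho> t x + v t x \<bullet> grad (\<rho> t) x = 0"
    and D_one: "\<And>t x. t \<in> T \<Longrightarrow> D t x = 1"
    \<comment> \<open>Euler-Poincare equation for ell(v, zeta, D, rho):
        (d/dt + ad*_v) dl/dv = dl/dD \<diamond> D + dl/drho \<diamond> rho\<close>
    and EP: "\<And>t x. t \<in> T \<Longrightarrow>
      (let M = (\<lambda>s y. dL_dv \<sigma> Fr \<rho>ref (v s y) (pt \<zeta> s y) (grad (\<zeta> s) y) (\<zeta> s y) (D s y) (\<rho> s y) (p s y));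
           PD = (\<lambda>y. dL_dD \<sigma> Fr \<rho>ref (v t y) (pt \<zeta> t y) (grad (\<zeta> t) y) (\<zeta> t y) (D t y) (\<rho> t y) (p t y));
           PR = dL_drho \<sigma> Fr \<rho>ref (v t x) (pt \<zeta> t x) (grad (\<zeta> t) x) (\<zeta> t x) (D t x) (\<rho> t x) (p t x)
       in pt M t x + dirD (M t) x (v t x) + gradT (v t) x (M t x) + div2 (v t) x *\<^sub>R M t x
          = D t x *\<^sub>R grad PD x - PR *\<^sub>R grad (\<rho> t) x)"
    \<comment> \<open>the closed loop c(v) moving with the horizontal flow\<close>
    and c_C1: "C1_on (T \<times> UNIV) (\<lambda>(t, s). c t s)"
    and c_s_C1: "C1_on (T \<times> UNIV) (\<lambda>(t, s). vector_derivative (c t) (at s))"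
    and c_closed: "\<And>t. t \<in> T \<Longrightarrow> c t 0 = c t 1"
    and c_moves: "\<And>t s. t \<in> T \<Longrightarrow> (pt c t s) = v t (c t s)"
  shows "\<And>t. t \<in> T \<Longrightarrow>
    ((\<lambda>\<tau>. integral {0..1} (\<lambda>s.
        v \<tau> (c \<tau> s) \<bullet> vector_derivative (c \<tau>) (at s)
        + \<sigma>^2 * (pt \<zeta> \<tau> (c \<tau> s) + v \<tau> (c \<tau> s) \<bullet> grad (\<zeta> \<tau>) (c \<tau> s))
            * vector_derivative (\<lambda>r. \<zeta> \<tau> (c \<tau> r)) (at s)))
     has_real_derivative
       - integral {0..1} (\<lambda>s. (1 / \<rho> t (c t s)) *
            vector_derivative (\<lambda>r. p t (c t r) + \<rho>ref * (\<zeta> t (c t r))^2 / (2 * Fr^2)) (at s)))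
    (at t)"
proof -
  interpret wave_current \<sigma> Fr \<rho>ref T v \<zeta> D \<rho> p
    by unfold_locales (fact assms)+
  obtain V' where "C1_deriv_on (T \<times> UNIV) (\<lambda>(t, x). v t x) V'"
    using C1_on_imp_C1_deriv_on[OF v_C1] by blast
  then interpret wave_current_loop \<sigma> Fr \<rho>ref T v \<zeta> D \<rho> p V' c
    using T_open c_C1 c_s_C1 c_closed c_moves by unfold_locales auto
  fix t assume "t \<in> T"
  then show "?thesis t"
    by (rule kelvin_circulation)
qed

end
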